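(* Let $\varepsilon,\delta,p$ be positive constants with $\varepsilon<1/2$. Let $(V_1,V_2,V_3)$ be a triple of pairwise disjoint vertex sets in a graph such that for all $i,j$ the density of $(V_i,V_j)$ is $d_{ij}p$ with $d_{ij}\ge\delta$. Then for every $\varepsilon$-typical vertex $v\in V_1$ there exist sets $N_j''\subset N(v)\cap V_j$ for $j\in\{2,3\}$ such that (i) there are at least $(1-6\varepsilon-2\varepsilon/\delta)d_{12}d_{13}d_{23}p^3|V_2||V_3|$ edges between $N_2''$ and $N_3''$, and if $v$ is $\varepsilon$-good, then at least that many of the edges between $N_2''$ and $N_3''$ are $\varepsilon$-good; (ii) for all $j,k$ with $\{j,k\}=\{2,3\}$, no vertex of $N_j''$ has more than $(1+2\varepsilon/\delta)(1+\varepsilon)^2d_{1k}d_{23}p^2|V_k|$ neighbours in $N_k''$.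
   Context: For disjoint $X,Y$, $d(X,Y)=e(X,Y)/(|X||Y|)$; $x=(1\pm a)y$ means $x\in[(1-a)y,(1+a)y]$. A pair $(X,Y)$ is $(\varepsilon,p)$-regular if $|d(X,Y)-d(X',Y')|\le\varepsilon p$ for all $X'\subset X,Y'\subset Y$ with $|X'|\ge\varepsilon|X|,|Y'|\ge\varepsilon|Y|$. A vertex $v\in V_1$ is $\varepsilon$-typical if for $j\in\{2,3\}$, $N_j=N(v)\cap V_j$ satisfies $|N_j|=(1\pm\varepsilon)d_{1j}p|V_j|$, and there exist $N_j'\subset N_j$ with $|N_j'|\ge(1-\varepsilon)|N_j|$ such that $(N_2',N_3')$ is $(\varepsilon,p)$-regular with density $(1\pm\varepsilon)d_{23}p$. An edge between $V_2$ and $V_3$ is $\varepsilon$-good if its endpoints have at least $(1-\varepsilon)d_{12}d_{13}p^2|V_1|$ common neighbours in $V_1$. An $\varepsilon$-typical vertex $v\in V_1$ is $\varepsilon$-good if at most $\varepsilon d_{12}d_{13}d_{23}p^3|V_2||V_3|$ edges between $N(v)\cap V_2$ and $N(v)\cap V_3$ are not $\varepsilon$-good. *)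

theory Defs
  imports Complex_Main
begin

definition graph :: "('a \<Rightarrow> 'a \<Rightarrow> bool) \<Rightarrow> bool" where
  "graph E \<longleftrightarrow> (\<forall>x y. E x y \<longrightarrow> E y x) \<and> (\<forall>x. \<not> E x x)"

definition nbhd :: "('a \<Rightarrow> 'a \<Rightarrow> bool) \<Rightarrow> 'a \<Rightarrow> 'a set" where
  "nbhd E v = {u. E v u}"

definition edges_between :: "('a \<Rightarrow> 'a \<Rightarrow> bool) \<Rightarrow> 'a set \<Rightarrow> 'a set \<Rightarrow> ('a \<times> 'a) set" where
  "edges_between E X Y = {(x, y). x \<in> X \<and> y \<in> Y \<and> E x y}"

definition e_count :: "('a \<Rightarrow> 'a \<Rightarrow> bool) \<Rightarrow> 'a set \<Rightarrow> 'a set \<Rightarrow> nat" where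
  "e_count E X Y = card (edges_between E X Y)"

definition density :: "('a \<Rightarrow> 'a \<Rightarrow> bool) \<Rightarrow> 'a set \<Rightarrow> 'a set \<Rightarrow> real" where
  "density E X Y = real (e_count E X Y) / (real (card X) * real (card Y))"

text \<open>x = (1 +- a) y\<close>
definition approx_eq :: "real \<Rightarrow> real \<Rightarrow> real \<Rightarrow> bool" where
  "approx_eq x a y \<longleftrightarrow> (1 - a) * y \<le> x \<and> x \<le> (1 + a) * y"

definition eps_p_regular :: "('a \<Rightarrow> 'a \<Rightarrow> bool) \<Rightarrow> real \<Rightarrow> real \<Rightarrow> 'a set \<Rightarrow> 'a set \<Rightarrow> bool" where
  "eps_p_regular E \<epsilon> p X Y \<longleftrightarrow>
     (\<forall>X' Y'. X' \<subseteq> X \<and> Y' \<subseteq> Y \<and> real (card X') \<ge> \<epsilon> * real (card X)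
        \<and> real (card Y') \<ge> \<epsilon> * real (card Y)
        \<longrightarrow> \<bar>density E X Y - density E X' Y'\<bar> \<le> \<epsilon> * p)"

definition typical :: "('a \<Rightarrow> 'a \<Rightarrow> bool) \<Rightarrow> real \<Rightarrow> real \<Rightarrow> real \<Rightarrow> real \<Rightarrow> real
    \<Rightarrow> 'a set \<Rightarrow> 'a set \<Rightarrow> 'a \<Rightarrow> bool" where
  "typical E \<epsilon> p d12 d13 d23 V2 V3 v \<longleftrightarrow>
     (let N2 = nbhd E v \<inter> V2; N3 = nbhd E v \<inter> V3 in
       approx_eq (real (card N2)) \<epsilon> (d12 * p * real (card V2)) \<and>
       approx_eq (real (card N3)) \<epsilon> (d13 * p * real (card V3)) \<and>
       (\<exists>N2' N3'. N2' \<subseteq> N2 \<and> N3' \<subseteq> N3 \<and>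
          real (card N2') \<ge> (1 - \<epsilon>) * real (card N2) \<and>
          real (card N3') \<ge> (1 - \<epsilon>) * real (card N3) \<and>
          eps_p_regular E \<epsilon> p N2' N3' \<and>
          approx_eq (density E N2' N3') \<epsilon> (d23 * p)))"

definition good_edge :: "('a \<Rightarrow> 'a \<Rightarrow> bool) \<Rightarrow> real \<Rightarrow> real \<Rightarrow> real \<Rightarrow> real
    \<Rightarrow> 'a set \<Rightarrow> 'a set \<Rightarrow> 'a set \<Rightarrow> 'a \<times> 'a \<Rightarrow> bool" where
  "good_edge E \<epsilon> p d12 d13 V1 V2 V3 xy \<longleftrightarrow>
     (fst xy \<in> V2 \<and> snd xy \<in> V3 \<and> E (fst xy) (snd xy) \<and>
      real (card (nbhd E (fst xy) \<inter> nbhd E (snd xy) \<inter> V1))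
        \<ge> (1 - \<epsilon>) * d12 * d13 * p ^ 2 * real (card V1))"

definition good_vertex :: "('a \<Rightarrow> 'a \<Rightarrow> bool) \<Rightarrow> real \<Rightarrow> real \<Rightarrow> real \<Rightarrow> real \<Rightarrow> real
    \<Rightarrow> 'a set \<Rightarrow> 'a set \<Rightarrow> 'a set \<Rightarrow> 'a \<Rightarrow> bool" where
  "good_vertex E \<epsilon> p d12 d13 d23 V1 V2 V3 v \<longleftrightarrow>
     typical E \<epsilon> p d12 d13 d23 V2 V3 v \<and>
     real (card {xy \<in> edges_between E (nbhd E v \<inter> V2) (nbhd E v \<inter> V3).
                  \<not> good_edge E \<epsilon> p d12 d13 V1 V2 V3 xy})
       \<le> \<epsilon> * d12 * d13 * d23 * p ^ 3 * real (card V2) * real (card V3)"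

end

theory Submission
  imports Defs
begin

text \<open>
  Typicality of v provides sets \<open>M\<^sub>2 \<subseteq> N(v) \<inter> V\<^sub>2\<close> and \<open>M\<^sub>3 \<subseteq> N(v) \<inter> V\<^sub>3\<close> of almost full size
  that form an \<open>(\<epsilon>, p)\<close>-regular pair of density \<open>(1 \<plusminus> \<epsilon>) d\<^sub>2\<^sub>3 p\<close>. The sets \<open>N\<^sub>j''\<close> are obtained by
  deleting from each side the vertices whose degree into the other side exceeds the bound in (ii),
  so (ii) holds by construction. Regularity makes the deleted sets cheap: every set of at least
  \<open>\<epsilon> |M\<^sub>j|\<close> vertices has average degree at most \<open>(d + \<epsilon> p) |M\<^sub>k|\<close>, so fewer than \<open>\<epsilon> |M\<^sub>j|\<close>
  vertices exceed the bound, and padding them to a set of size \<open>\<lceil>\<epsilon> |M\<^sub>j|\<rceil>\<close> shows that they carry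
  at most their average share of edges plus \<open>O(\<epsilon>\<^sup>2 p |M\<^sub>2| |M\<^sub>3|)\<close>. Comparing the surviving edges with
  \<open>d\<^sub>1\<^sub>2 d\<^sub>1\<^sub>3 d\<^sub>2\<^sub>3 p\<^sup>3 |V\<^sub>2| |V\<^sub>3|\<close> is then an estimate in a few real parameters, and for a good vertex
  at most an \<open>\<epsilon>\<close>-fraction of that quantity of the edges can be bad.
\<close>

lemma edges_between_eq_Sigma: "edges_between E X Y = Sigma X (\<lambda>x. nbhd E x \<inter> Y)"
  by (auto simp: edges_between_def nbhd_def)

lemma finite_edges_between: "finite X \<Longrightarrow> finite Y \<Longrightarrow> finite (edges_between E X Y)"
  by (simp add: edges_between_eq_Sigma)

lemma e_count_eq_sum_degree:
  "finite X \<Longrightarrow> finite Y \<Longrightarrow> e_count E X Y = (\<Sum>x\<in>X. card (nbhd E x \<inter> Y))"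
  by (simp add: e_count_def edges_between_eq_Sigma)

lemma e_count_commute:
  assumes "graph E"
  shows "e_count E X Y = e_count E Y X"
proof -
  have "edges_between E X Y = prod.swap ` edges_between E Y X"
    using assms by (auto simp: edges_between_def graph_def image_iff)
  then show ?thesis
    by (simp add: e_count_def card_image)
qed

lemma density_commute: "graph E \<Longrightarrow> density E X Y = density E Y X"
  unfolding density_def by (metis e_count_commute mult.commute)

lemma eps_p_regular_commute:
  "graph E \<Longrightarrow> eps_p_regular E \<epsilon> p X Y \<Longrightarrow> eps_p_regular E \<epsilon> p Y X"
  unfolding eps_p_regular_def by (metis density_commute)

lemma e_count_le_of_regular:
  fixes \<epsilon> p :: real
  assumes "eps_p_regular E \<epsilon> p X Y" "finite X'" "finite Y" "X' \<subseteq> X" "\<epsilon> * card X \<le> card X'"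
    and "\<epsilon> \<le> 1"
  shows "e_count E X' Y \<le> (density E X Y + \<epsilon> * p) * card X' * card Y"
proof (cases "card X' = 0 \<or> card Y = 0")
  case True
  then have "X' = {} \<or> Y = {}"
    using assms(2,3) by simp
  then have "e_count E X' Y = 0"
    by (auto simp: e_count_def edges_between_def)
  with True show ?thesis
    by auto
next
  case False
  have "\<epsilon> * card Y \<le> card Y"
    using mult_right_mono[OF \<open>\<epsilon> \<le> 1\<close>, of "card Y"] by simp
  with assms(1,4,5) have "\<bar>density E X Y - density E X' Y\<bar> \<le> \<epsilon> * p"
    unfolding eps_p_regular_def by blast
  then have "density E X' Y \<le> density E X Y + \<epsilon> * p"
    by linarith
  with False show ?thesis
    by (simp add: density_def field_simps)
qed

lemma exists_subset_card_sum_ge_avg: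
  fixes f :: "'a \<Rightarrow> real"
  assumes "finite S" "m \<le> card S"
  shows "\<exists>W\<subseteq>S. card W = m \<and> m * sum f S \<le> card S * sum f W"
  using assms
proof (induction "card S - m" arbitrary: S)
  case 0
  then show ?case by auto
next
  case (Suc j)
  then have "S \<noteq> {}" by auto
  have "Min (f ` S) \<in> f ` S"
    using \<open>finite S\<close> \<open>S \<noteq> {}\<close> by (intro Min_in) auto
  then obtain x where x: "x \<in> S" "f x = Min (f ` S)"
    by auto
  define S' where "S' = S - {x}"
  have S': "finite S'" "card S' = card S - 1" "m \<le> card S'"
    using Suc.prems Suc.hyps(2) x(1) by (auto simp: S'_def)
  have "j = card S' - m"
    using Suc.hyps(2) S'(2) by simp
  then obtain W where W: "W \<subseteq> S'" "card W = m" "m * sum f S' \<le> card S' * sum f W"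
    using Suc.hyps(1) S'(1,3) by blast
  have card_S': "real (card S') = real (card S) - 1"
    using S'(2) Suc.prems(1) \<open>S \<noteq> {}\<close> by (simp add: of_nat_diff Suc_le_eq card_gt_0_iff)
  have sum_S: "sum f S = sum f S' + f x"
    using Suc.prems(1) x(1) by (simp add: S'_def sum.remove)
  have "card S * f x \<le> sum f S"
    using sum_bounded_below[of S "f x" f] Suc.prems(1) x by auto
  moreover have "card S * f x = f x + card S' * f x"
    by (simp add: card_S' algebra_simps)
  ultimately have min_le_avg: "card S' * f x \<le> sum f S'"
    using sum_S by linarith
  have "card S' * (m * sum f S) = card S' * (m * sum f S') + m * (card S' * f x)"
    by (simp add: sum_S algebra_simps)
  also have "\<dots> \<le> card S' * (m * sum f S') + m * sum f S'"
    using min_le_avg by (intro add_left_mono mult_left_mono) auto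
  also have "\<dots> = card S * (m * sum f S')"
    unfolding card_S' by (simp add: algebra_simps)
  also have "\<dots> \<le> card S * (card S' * sum f W)"
    using W(3) by (intro mult_left_mono) auto
  finally have "card S' * (m * sum f S) \<le> card S' * (card S * sum f W)"
    by (simp add: algebra_simps)
  moreover have "W = {}" if "card S' = 0"
    using W(1) S'(1) that by (auto dest: finite_subset)
  ultimately have "m * sum f S \<le> card S * sum f W"
    using W(2) by (cases "card S' = 0") auto
  with W(1,2) show ?case
    by (auto simp: S'_def)
qed

text \<open>
  Here \<open>S\<close> and \<open>w\<close> are the sums of a function over a set of size \<open>b\<close> and over a disjoint padding
  of size \<open>k - b\<close> that averages at least as much as the remaining \<open>n - b\<close> points; \<open>a\<close> is the mean
  over all \<open>n\<close> points and \<open>c\<close> bounds the mean over every set of size \<open>k\<close>.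
\<close>

lemma padding_excess_le:
  fixes S w a c n k b \<epsilon> :: real
  assumes padded: "S + w \<le> c * k" and avg: "(k - b) * (a * n - S) \<le> (n - b) * w"
    and "0 \<le> b" "b \<le> k" "k \<le> 2 * \<epsilon> * n" "0 < n" "0 < \<epsilon>" "\<epsilon> < 1/2" "a \<le> c"
  shows "S \<le> a * b + 2 * \<epsilon> * (c - a) * n / (1 - 2 * \<epsilon>)"
proof -
  have "2 * \<epsilon> * n \<le> n"
    using assms by simp
  then have "b \<le> n" "0 \<le> k"
    using assms by linarith+
  have gap: "(1 - 2 * \<epsilon>) * n \<le> n - k"
    using assms by (simp add: algebra_simps)
  have pos: "0 < (1 - 2 * \<epsilon>) * n"
    using assms by simp
  have "(n - b) * (S + w) \<le> (n - b) * (c * k)"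
    using padded \<open>b \<le> n\<close> by (intro mult_left_mono) auto
  with avg have rearranged: "S * (n - k) \<le> a * b * (n - k) + (c - a) * k * (n - b)"
    by (simp add: algebra_simps)
  have "(c - a) * k * (n - b) \<le> (c - a) * (2 * \<epsilon> * n) * n"
    using assms \<open>0 \<le> k\<close> \<open>b \<le> n\<close> by (intro mult_mono mult_left_mono) auto
  then have excess: "(c - a) * k * (n - b) / (n - k) \<le> (c - a) * (2 * \<epsilon> * n) * n / ((1 - 2 * \<epsilon>) * n)"
    using assms gap pos \<open>b \<le> n\<close> \<open>0 \<le> k\<close> by (intro frac_le) simp_all
  have "S \<le> a * b + (c - a) * k * (n - b) / (n - k)"
    using rearranged gap pos by (simp add: field_simps)
  also have "\<dots> \<le> a * b + (c - a) * (2 * \<epsilon> * n) * n / ((1 - 2 * \<epsilon>) * n)"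
    using excess by simp
  also have "(c - a) * (2 * \<epsilon> * n) * n / ((1 - 2 * \<epsilon>) * n) = 2 * \<epsilon> * (c - a) * n / (1 - 2 * \<epsilon>)"
    using assms by (simp add: field_simps)
  finally show ?thesis
    by simp
qed

lemma card_high_values_le:
  fixes f :: "'a \<Rightarrow> real" and \<epsilon> c T :: real
  assumes "finite A" "0 \<le> \<epsilon>" "c \<le> T"
    and large_sum: "\<And>X. X \<subseteq> A \<Longrightarrow> \<epsilon> * card A \<le> card X \<Longrightarrow> sum f X \<le> c * card X"
  shows "card {x\<in>A. T < f x} \<le> \<epsilon> * card A"
proof -
  define B where "B = {x\<in>A. T < f x}"
  have "card B \<le> \<epsilon> * card A"
  proof (rule ccontr)
    assume not_small: "\<not> ?thesis"
    then have large: "\<epsilon> * card A \<le> card B"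
      by simp
    have "B \<noteq> {}"
    proof
      assume "B = {}"
      with not_small \<open>0 \<le> \<epsilon>\<close> show False
        by simp
    qed
    have "B \<subseteq> A" "finite B"
      using \<open>finite A\<close> by (auto simp: B_def)
    have "(\<Sum>x\<in>B. T) < sum f B"
      using \<open>finite B\<close> \<open>B \<noteq> {}\<close> by (rule sum_strict_mono) (simp add: B_def)
    then have "T * card B < sum f B"
      by (simp add: mult.commute)
    moreover have "sum f B \<le> c * card B"
      using \<open>B \<subseteq> A\<close> large by (rule large_sum)
    moreover have "c * card B \<le> T * card B"
      using \<open>c \<le> T\<close> by (simp add: mult_right_mono)
    ultimately show False
      by linarith
  qed
  then show ?thesis
    by (simp add: B_def)
qed

lemma high_values_empty:
  fixes f :: "'a \<Rightarrow> real" and \<epsilon> c T :: real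
  assumes "\<epsilon> * card A \<le> 1" "c \<le> T"
    and large_sum: "\<And>X. X \<subseteq> A \<Longrightarrow> \<epsilon> * card A \<le> card X \<Longrightarrow> sum f X \<le> c * card X"
  shows "{x\<in>A. T < f x} = {}"
proof -
  have "f x \<le> T" if "x \<in> A" for x
    using large_sum[of "{x}"] assms(1,2) that by simp
  then show ?thesis
    by (auto simp: not_less)
qed

lemma sum_subset_le_by_padding:
  fixes f :: "'a \<Rightarrow> real" and \<epsilon> c :: real and k :: nat
  assumes "finite A" "B \<subseteq> A" "card B \<le> k" "\<epsilon> * card A \<le> k" "k \<le> 2 * \<epsilon> * card A"
    and "0 < \<epsilon>" "\<epsilon> < 1/2" "0 < card A" "sum f A \<le> c * card A"
    and large_sum: "\<And>X. X \<subseteq> A \<Longrightarrow> \<epsilon> * card A \<le> card X \<Longrightarrow> sum f X \<le> c * card X"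
  shows "sum f B \<le> sum f A / card A * card B + 2 * \<epsilon> * (c - sum f A / card A) * card A / (1 - 2 * \<epsilon>)"
proof -
  define n a where "n = real (card A)" and "a = sum f A / n"
  have "0 < n" "finite B"
    using assms(1,2,8) finite_subset by (auto simp: n_def)
  have "2 * \<epsilon> * n \<le> n"
    using \<open>\<epsilon> < 1/2\<close> \<open>0 < n\<close> by simp
  then have "k \<le> card A"
    using assms(5) unfolding n_def by linarith
  have card_diff: "card (A - B) = card A - card B"
    using \<open>B \<subseteq> A\<close> \<open>finite B\<close> by (simp add: card_Diff_subset)
  have "k - card B \<le> card (A - B)"
    using \<open>k \<le> card A\<close> card_diff by simp
  then obtain W where W: "W \<subseteq> A - B" "card W = k - card B"
    "(k - card B) * sum f (A - B) \<le> card (A - B) * sum f W"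
    using exists_subset_card_sum_ge_avg[of "A - B" "k - card B" f] \<open>finite A\<close> by blast
  have "finite W" "B \<inter> W = {}"
    using W(1) \<open>finite A\<close> finite_subset by auto
  then have "card (B \<union> W) = k"
    using \<open>finite B\<close> W(2) \<open>card B \<le> k\<close> by (simp add: card_Un_disjoint)
  have "sum f (B \<union> W) \<le> c * card (B \<union> W)"
    using \<open>B \<subseteq> A\<close> W(1) assms(4) \<open>card (B \<union> W) = k\<close> by (intro large_sum) auto
  then have "sum f B + sum f W \<le> c * k"
    using \<open>finite B\<close> \<open>finite W\<close> \<open>B \<inter> W = {}\<close> \<open>card (B \<union> W) = k\<close> by (simp add: sum.union_disjoint)
  moreover have "sum f (A - B) = a * n - sum f B"
    using sum_diff[OF \<open>finite A\<close> \<open>B \<subseteq> A\<close>, of f] \<open>0 < n\<close> by (simp add: a_def)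
  then have "(k - real (card B)) * (a * n - sum f B) \<le> (n - card B) * sum f W"
    using W(3) card_diff \<open>card B \<le> k\<close> card_mono[OF \<open>finite A\<close> \<open>B \<subseteq> A\<close>]
    by (simp add: of_nat_diff n_def)
  moreover have "a \<le> c"
    using assms(9) \<open>0 < n\<close> by (simp add: a_def n_def divide_le_eq)
  ultimately have "sum f B \<le> a * card B + 2 * \<epsilon> * (c - a) * n / (1 - 2 * \<epsilon>)"
    using padding_excess_le[of "sum f B" "sum f W" c k "card B" a n \<epsilon>] assms(5-7) \<open>0 < n\<close> \<open>card B \<le> k\<close>
    by (simp add: n_def)
  then show ?thesis
    by (simp add: a_def n_def)
qed

lemma sum_high_values_le:
  fixes f :: "'a \<Rightarrow> real" and \<epsilon> c T :: real
  assumes "finite A" "0 < \<epsilon>" "\<epsilon> < 1/2" "c \<le> T"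
    and large_sum: "\<And>X. X \<subseteq> A \<Longrightarrow> \<epsilon> * card A \<le> card X \<Longrightarrow> sum f X \<le> c * card X"
  shows "sum f {x\<in>A. T < f x}
           \<le> sum f A / card A * card {x\<in>A. T < f x} + 2 * \<epsilon> * (c - sum f A / card A) * card A / (1 - 2 * \<epsilon>)"
proof -
  define B where "B = {x\<in>A. T < f x}"
  have "\<epsilon> * card A \<le> card A"
    using mult_right_mono[of \<epsilon> 1 "card A"] \<open>\<epsilon> < 1/2\<close> by simp
  then have sum_A: "sum f A \<le> c * card A"
    by (rule large_sum[OF order_refl])
  have "sum f B \<le> sum f A / card A * card B + 2 * \<epsilon> * (c - sum f A / card A) * card A / (1 - 2 * \<epsilon>)"
  proof (cases "B = {}")
    case True
    have "0 \<le> (c - sum f A / card A) * card A"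
    proof (cases "card A = 0")
      case False
      then show ?thesis
        using sum_A by (simp add: left_diff_distrib)
    qed simp
    with True assms(2,3) show ?thesis
      by (simp add: mult.assoc)
  next
    case False
    have "1 < \<epsilon> * card A"
    proof (rule ccontr)
      assume "\<not> 1 < \<epsilon> * card A"
      then have "B = {}"
        unfolding B_def using \<open>c \<le> T\<close> large_sum by (intro high_values_empty) (simp_all add: not_less)
      with False show False
        by simp
    qed
    then have "0 < card A"
      by (cases "card A = 0") simp_all
    define k where "k = nat \<lceil>\<epsilon> * card A\<rceil>"
    have k_ge: "\<epsilon> * card A \<le> k" and k_le: "k \<le> 2 * \<epsilon> * card A"
      using \<open>1 < \<epsilon> * card A\<close> unfolding k_def by linarith+
    have "card B \<le> \<epsilon> * card A"
      unfolding B_def using \<open>finite A\<close> _ \<open>c \<le> T\<close> large_sum by (rule card_high_values_le) (use \<open>0 < \<epsilon>\<close> in simp)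
    with k_ge have "card B \<le> k"
      by linarith
    moreover have "B \<subseteq> A"
      by (simp add: B_def)
    ultimately show ?thesis
      using \<open>finite A\<close> k_ge k_le assms(2,3) \<open>0 < card A\<close> sum_A large_sum
      by (intro sum_subset_le_by_padding)
  qed
  then show ?thesis
    by (simp only: B_def)
qed

lemma e_count_le_prune:
  assumes "finite X" "finite Y" "A \<subseteq> X" "B \<subseteq> Y"
  shows "e_count E X Y \<le> e_count E (X - A) (Y - B) + e_count E A Y + e_count E X B"
proof -
  have fin: "finite (edges_between E X' Y')" if "X' \<subseteq> X" "Y' \<subseteq> Y" for X' Y'
    using assms(1,2) that by (meson finite_edges_between finite_subset)
  have "edges_between E X Y
      \<subseteq> edges_between E (X - A) (Y - B) \<union> edges_between E A Y \<union> edges_between E X B"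
    by (auto simp: edges_between_def)
  then have "e_count E X Y
      \<le> card (edges_between E (X - A) (Y - B) \<union> edges_between E A Y \<union> edges_between E X B)"
    unfolding e_count_def using assms(3,4) by (intro card_mono) (auto intro: fin)
  also have "\<dots> \<le> e_count E (X - A) (Y - B) + e_count E A Y + e_count E X B"
    unfolding e_count_def by (meson card_Un_le add_right_mono order_trans)
  finally show ?thesis .
qed

definition high_degree :: "('a \<Rightarrow> 'a \<Rightarrow> bool) \<Rightarrow> 'a set \<Rightarrow> 'a set \<Rightarrow> real \<Rightarrow> 'a set" where
  "high_degree E X Y T = {x\<in>X. T < card (nbhd E x \<inter> Y)}"

lemma degree_le_outside_high_degree:
  fixes T :: real
  assumes "finite Y" "x \<in> X - high_degree E X Y T"
  shows "card (nbhd E x \<inter> (Y - Z)) \<le> T"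
proof -
  have "card (nbhd E x \<inter> (Y - Z)) \<le> card (nbhd E x \<inter> Y)"
    using assms(1) by (intro card_mono) auto
  then show ?thesis
    using assms(2) by (auto simp: high_degree_def)
qed

lemma high_degree_bounds:
  fixes E :: "'a \<Rightarrow> 'a \<Rightarrow> bool" and X Y :: "'a set" and \<epsilon> p T :: real
  defines "H \<equiv> high_degree E X Y T"
    and "Q \<equiv> 2 * \<epsilon>\<^sup>2 * p * card X * card Y / (1 - 2 * \<epsilon>)"
  assumes "eps_p_regular E \<epsilon> p X Y" "finite X" "finite Y" "0 < \<epsilon>" "\<epsilon> < 1/2"
    and "(density E X Y + \<epsilon> * p) * card Y \<le> T"
  shows "card H \<le> \<epsilon> * card X"
    and "e_count E H Y \<le> density E X Y * card Y * card H + Q"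
    and "card H * (T - density E X Y * card Y) \<le> Q"
proof -
  define f where "f x = real (card (nbhd E x \<inter> Y))" for x
  have H_eq: "H = {x\<in>X. T < f x}"
    by (simp add: H_def high_degree_def f_def)
  have "finite H" "H \<subseteq> X"
    using \<open>finite X\<close> by (auto simp: H_eq)
  have sum_f: "sum f X' = e_count E X' Y" if "finite X'" for X'
    using that \<open>finite Y\<close> by (simp add: e_count_eq_sum_degree f_def)
  have large_sum: "sum f X' \<le> (density E X Y + \<epsilon> * p) * card Y * card X'"
    if "X' \<subseteq> X" "\<epsilon> * card X \<le> card X'" for X'
    using e_count_le_of_regular[OF assms(3) _ \<open>finite Y\<close> that] that(1) \<open>finite X\<close> \<open>\<epsilon> < 1/2\<close>
    by (simp add: sum_f finite_subset algebra_simps)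
  have avg: "sum f X / card X = density E X Y * card Y"
  proof (cases "X = {} \<or> Y = {}")
    case True
    then show ?thesis
      using sum_f[OF \<open>finite X\<close>] by (auto simp: density_def e_count_def edges_between_def)
  next
    case False
    then show ?thesis
      using sum_f[OF \<open>finite X\<close>] \<open>finite X\<close> \<open>finite Y\<close> by (simp add: density_def)
  qed
  show "card H \<le> \<epsilon> * card X"
    unfolding H_eq by (rule card_high_values_le[OF assms(4) _ assms(8) large_sum]) (use assms(6) in simp)
  have "sum f H \<le> density E X Y * card Y * card H + Q"
    using sum_high_values_le[OF assms(4,6,7,8) large_sum] unfolding H_eq[symmetric] avg
    by (simp add: Q_def power2_eq_square algebra_simps)
  then show "e_count E H Y \<le> density E X Y * card Y * card H + Q"
    using sum_f[OF \<open>finite H\<close>] by simp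
  have "(\<Sum>x\<in>H. T) \<le> sum f H"
    by (rule sum_mono) (simp add: H_eq)
  with \<open>sum f H \<le> _\<close> show "card H * (T - density E X Y * card Y) \<le> Q"
    by (simp add: algebra_simps)
qed

lemma one_minus_pow5_bounds:
  fixes e :: real
  assumes "0 < e" "e < 1/5"
  shows "1 - 5 * e + 8 * e\<^sup>2 \<le> (1 - e) ^ 5" and "(1 - e) ^ 5 \<le> 1 - 5 * e + 10 * e\<^sup>2"
proof -
  have expand: "(1 - e) ^ 5 = 1 - 5 * e + 10 * e\<^sup>2 - 10 * e ^ 3 + 5 * e ^ 4 - e ^ 5"
    by (simp add: power2_eq_square power3_eq_cube power_def algebra_simps numeral_eq_Suc)
  have "e ^ 3 \<le> e\<^sup>2 / 5"
    using assms by (simp add: power2_eq_square power3_eq_cube)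
  moreover have "e ^ 5 \<le> e ^ 4" "e ^ 4 \<le> e ^ 3"
    using assms by (simp_all add: power_decreasing)
  moreover have "0 \<le> e ^ 3" "0 \<le> e ^ 4" "0 \<le> e ^ 5"
    using assms by simp_all
  ultimately show "1 - 5 * e + 8 * e\<^sup>2 \<le> (1 - e) ^ 5" and "(1 - e) ^ 5 \<le> 1 - 5 * e + 10 * e\<^sup>2"
    using expand by linarith+
qed

lemma low_low_margin:
  fixes e u :: real
  assumes "0 < e" "e < 1/5" "0 < u"
  shows "(1 - 5 * e - u) * ((2 * e + u) * ((1 - e) * (1 - 2 * e)))
    \<le> (1 - 5 * e + 8 * e\<^sup>2) * ((2 * e + u) * ((1 - e) * (1 - 2 * e)))
       - (1 - 5 * e + 10 * e\<^sup>2) * (2 * e * u * (1 + (2 * e + u)))"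
proof -
  have expand: "(1 - 5 * e + 8 * e\<^sup>2) * ((2 * e + u) * ((1 - e) * (1 - 2 * e)))
      - (1 - 5 * e + 10 * e\<^sup>2) * (2 * e * u * (1 + (2 * e + u)))
      - (1 - 5 * e - u) * ((2 * e + u) * ((1 - e) * (1 - 2 * e)))
    = u\<^sup>2 * (1 - 5 * e + 12 * e\<^sup>2 - 20 * e ^ 3) + u * e\<^sup>2 * (8 - 20 * e - 24 * e\<^sup>2)
      + 16 * e ^ 3 * (1 - 3 * e + 2 * e\<^sup>2)"
    by (simp add: power2_eq_square power3_eq_cube algebra_simps)
  have "20 * e ^ 3 \<le> 4 * e\<^sup>2" "e\<^sup>2 \<le> e / 5"
    using assms by (simp_all add: power2_eq_square power3_eq_cube)
  moreover have "0 \<le> e\<^sup>2"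
    by simp
  ultimately have "0 \<le> 1 - 5 * e + 12 * e\<^sup>2 - 20 * e ^ 3" "0 \<le> 8 - 20 * e - 24 * e\<^sup>2"
    "0 \<le> 1 - 3 * e + 2 * e\<^sup>2"
    using assms by linarith+
  with assms have "0 \<le> u\<^sup>2 * (1 - 5 * e + 12 * e\<^sup>2 - 20 * e ^ 3)"
    "0 \<le> u * e\<^sup>2 * (8 - 20 * e - 24 * e\<^sup>2)" "0 \<le> 16 * e ^ 3 * (1 - 3 * e + 2 * e\<^sup>2)"
    by simp_all
  with expand show ?thesis
    by linarith
qed

lemma high_high_margin:
  fixes e u :: real
  assumes "0 < e" "e < 1/5" "0 < u"
  shows "(1 - 5 * e - u) * (1 + e) * (1 - 2 * e) \<le> (1 - 2 * e)\<^sup>2 - 2 * e * u * (1 + e) ^ 3"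
proof -
  have expand: "(1 - 2 * e)\<^sup>2 - 2 * e * u * (1 + e) ^ 3 - (1 - 5 * e - u) * (1 + e) * (1 - 2 * e)
     = e * (2 + e - 10 * e\<^sup>2) + u * (1 - 3 * e - 8 * e\<^sup>2 - 6 * e ^ 3 - 2 * e ^ 4)"
    by (simp add: power2_eq_square power3_eq_cube power4_eq_xxxx algebra_simps)
  have "e\<^sup>2 \<le> e / 5" "e ^ 3 \<le> e\<^sup>2 / 5"
    using assms by (simp_all add: power2_eq_square power3_eq_cube)
  moreover have "e ^ 4 \<le> e ^ 3"
    using assms by (simp add: power_decreasing)
  ultimately have "0 \<le> 2 + e - 10 * e\<^sup>2" "0 \<le> 1 - 3 * e - 8 * e\<^sup>2 - 6 * e ^ 3 - 2 * e ^ 4"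
    using assms by linarith+
  with expand assms show ?thesis
    by (smt (verit) mult_nonneg_nonneg)
qed

lemma low_high_margin:
  fixes e u :: real
  assumes "0 < e" "e < 1/5" "0 < u"
  shows "e * u * (1 + 2 * (2 * e + u)) \<le> (2 * e + u) * (2 * e + u) * ((1 - e) * (1 - 2 * e))"
proof -
  have expand: "(2 * e + u) * (2 * e + u) * ((1 - e) * (1 - 2 * e)) - e * u * (1 + 2 * (2 * e + u))
     = 4 * e\<^sup>2 * ((1 - e) * (1 - 2 * e)) + e * u * (3 - 16 * e + 8 * e\<^sup>2) + u\<^sup>2 * (1 - 5 * e + 2 * e\<^sup>2)"
    by (simp add: power2_eq_square algebra_simps)
  have "0 \<le> 8 * (e - 1/5)\<^sup>2"
    by simp
  then have "0 \<le> 3 - 16 * e + 8 * e\<^sup>2"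
    using assms by (simp add: power2_eq_square algebra_simps)
  moreover have "0 \<le> 1 - 5 * e + 2 * e\<^sup>2" "0 \<le> (1 - e) * (1 - 2 * e)"
    using assms by (simp_all add: power2_eq_square)
  ultimately have "0 \<le> 4 * e\<^sup>2 * ((1 - e) * (1 - 2 * e))" "0 \<le> e * u * (3 - 16 * e + 8 * e\<^sup>2)"
    "0 \<le> u\<^sup>2 * (1 - 5 * e + 2 * e\<^sup>2)"
    using assms by simp_all
  with expand show ?thesis
    by linarith
qed

lemma le_of_scaled_bounds:
  fixes r c D G K W E2 :: real
  assumes "G * K \<le> E2 * W" "r * W \<le> c * K" "c * D \<le> G"
    and "0 < r" "0 < c" "0 < D" "0 < W"
  shows "r * D \<le> E2"
proof -
  have "0 < K"
    using assms(2,4,5,7) by (smt (verit) mult_pos_pos mult_nonneg_nonpos)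
  have "r * D * W \<le> D * (c * K)"
    using assms(2,6) by (simp add: mult_left_mono algebra_simps)
  also have "\<dots> \<le> G * K"
    using assms(3) \<open>0 < K\<close> by (simp add: mult_right_mono algebra_simps)
  finally have "r * D * W \<le> E2 * W"
    using assms(1) by linarith
  with \<open>0 < W\<close> show ?thesis
    by simp
qed

lemma pruned_bound_low_low:
  fixes e u G D Q L2 L3 E2 :: real
  assumes "0 < e" "5 * e + u < 1" "0 < u" "0 < D"
    and G: "(1 - e) ^ 5 * D \<le> G" and QG: "Q * ((1 - e) * (1 - 2 * e)) \<le> e * u * G"
    and L2: "L2 * (2 * e + u) \<le> Q" and L3: "L3 * (2 * e + u) \<le> Q"
    and E: "G - L2 - L3 - 2 * Q \<le> E2"
  shows "(1 - 5 * e - u) * D \<le> E2"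
proof -
  define s W where "s = 2 * e + u" and "W = (1 - e) * (1 - 2 * e)"
  have "e < 1/5" "0 < s" "0 < W"
    using assms(1-3) by (simp_all add: s_def W_def)
  have "(G - L2 - L3 - 2 * Q) * s \<le> E2 * s"
    using E \<open>0 < s\<close> by (simp add: mult_right_mono)
  then have "G * s - 2 * Q * (1 + s) \<le> E2 * s"
    using L2 L3 by (simp add: s_def algebra_simps)
  then have "(G * s - 2 * Q * (1 + s)) * W \<le> E2 * s * W"
    using \<open>0 < W\<close> by (simp add: mult_right_mono)
  moreover have "2 * (1 + s) * (Q * W) \<le> 2 * (1 + s) * (e * u * G)"
    using QG \<open>0 < s\<close> by (intro mult_left_mono) (auto simp: W_def)
  ultimately have "G * (s * W - 2 * e * u * (1 + s)) \<le> E2 * (s * W)"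
    by (simp add: algebra_simps)
  moreover have "(1 - 5 * e - u) * (s * W) \<le> (1 - e) ^ 5 * (s * W - 2 * e * u * (1 + s))"
  proof -
    note pow5 = one_minus_pow5_bounds[OF \<open>0 < e\<close> \<open>e < 1/5\<close>]
    have "(1 - 5 * e + 8 * e\<^sup>2) * (s * W) \<le> (1 - e) ^ 5 * (s * W)"
      using pow5(1) \<open>0 < s\<close> \<open>0 < W\<close> by (simp add: mult_right_mono)
    moreover have "(1 - e) ^ 5 * (2 * e * u * (1 + s)) \<le> (1 - 5 * e + 10 * e\<^sup>2) * (2 * e * u * (1 + s))"
      using pow5(2) assms(1,3) \<open>0 < s\<close> by (simp add: mult_right_mono)
    ultimately show ?thesis
      using low_low_margin[OF \<open>0 < e\<close> \<open>e < 1/5\<close> \<open>0 < u\<close>] by (simp add: s_def W_def right_diff_distrib)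
  qed
  ultimately show ?thesis
    using le_of_scaled_bounds[OF _ _ G] assms(2,4) \<open>e < 1/5\<close> \<open>0 < s\<close> \<open>0 < W\<close> by simp
qed

lemma pruned_bound_high_high:
  fixes e u G D Q L2 L3 E2 :: real
  assumes "0 < e" "5 * e + u < 1" "0 < u" "0 < D"
    and G: "D \<le> G * (1 + e)" and QD: "Q * (1 - 2 * e) \<le> e * u * (1 + e)\<^sup>2 * D"
    and L2: "L2 \<le> e * G" and L3: "L3 \<le> e * G"
    and E: "G - L2 - L3 - 2 * Q \<le> E2"
  shows "(1 - 5 * e - u) * D \<le> E2"
proof -
  define W where "W = (1 + e) * (1 - 2 * e)"
  have "e < 1/5" "0 < W"
    using assms(1-3) by (simp_all add: W_def)
  have "(G * (1 - 2 * e) - 2 * Q) * W \<le> E2 * W"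
    using E L2 L3 \<open>0 < W\<close> by (intro mult_right_mono) (auto simp: algebra_simps)
  moreover have "(G * (1 - 2 * e) - 2 * Q) * W = (G * (1 + e)) * (1 - 2 * e)\<^sup>2 - 2 * (1 + e) * (Q * (1 - 2 * e))"
    by (simp add: W_def power2_eq_square algebra_simps)
  moreover have "D * (1 - 2 * e)\<^sup>2 \<le> (G * (1 + e)) * (1 - 2 * e)\<^sup>2"
    using G by (simp add: mult_right_mono)
  moreover have "2 * (1 + e) * (Q * (1 - 2 * e)) \<le> 2 * (1 + e) * (e * u * (1 + e)\<^sup>2 * D)"
    using QD assms(1) by simp
  moreover have "D * (1 - 2 * e)\<^sup>2 - 2 * (1 + e) * (e * u * (1 + e)\<^sup>2 * D) = D * ((1 - 2 * e)\<^sup>2 - 2 * e * u * (1 + e) ^ 3)"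
    by (simp add: power2_eq_square power3_eq_cube algebra_simps)
  moreover have "D * ((1 - 5 * e - u) * (1 + e) * (1 - 2 * e)) \<le> D * ((1 - 2 * e)\<^sup>2 - 2 * e * u * (1 + e) ^ 3)"
    using high_high_margin[OF \<open>0 < e\<close> \<open>e < 1/5\<close> \<open>0 < u\<close>] \<open>0 < D\<close> by (simp add: mult_left_mono)
  ultimately have "((1 - 5 * e - u) * D) * W \<le> E2 * W"
    by (simp add: W_def algebra_simps)
  with \<open>0 < W\<close> show ?thesis
    by simp
qed

lemma pruned_bound_low_high:
  fixes e u G D Q L2 L3 E2 :: real
  assumes "0 < e" "5 * e + u < 1" "0 < u" "0 < D"
    and G: "(1 - e)\<^sup>2 * D \<le> G" and QG: "Q * ((1 - e) * (1 - 2 * e)) \<le> e * u * G"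
    and L2: "L2 \<le> e * G" and L3: "L3 * (2 * e + u) \<le> Q"
    and E: "G - L2 - L3 - 2 * Q \<le> E2"
  shows "(1 - 5 * e - u) * D \<le> E2"
proof -
  define s W where "s = 2 * e + u" and "W = (1 - e) * (1 - 2 * e)"
  have "e < 1/5" "0 < s" "0 < W"
    using assms(1-3) by (simp_all add: s_def W_def)
  have "(G - L2 - L3 - 2 * Q) * s \<le> E2 * s" "L2 * s \<le> e * G * s"
    using E L2 \<open>0 < s\<close> by (simp_all add: mult_right_mono)
  then have "G * (1 - e) * s - Q * (1 + 2 * s) \<le> E2 * s"
    using L3 by (simp add: s_def algebra_simps)
  then have "(G * (1 - e) * s - Q * (1 + 2 * s)) * W \<le> E2 * s * W"
    using \<open>0 < W\<close> by (simp add: mult_right_mono)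
  moreover have "(1 + 2 * s) * (Q * W) \<le> (1 + 2 * s) * (e * u * G)"
    using QG \<open>0 < s\<close> by (intro mult_left_mono) (auto simp: W_def)
  ultimately have "G * ((1 - e) * s * W - e * u * (1 + 2 * s)) \<le> E2 * (s * W)"
    by (simp add: algebra_simps)
  moreover have "(1 - 5 * e - u) * (s * W) \<le> (1 - e)\<^sup>2 * ((1 - e) * s * W - e * u * (1 + 2 * s))"
  proof -
    have "(1 - e) ^ 3 = 1 - 3 * e + 3 * e\<^sup>2 - e ^ 3"
      by (simp add: power2_eq_square power3_eq_cube algebra_simps)
    moreover have "e ^ 3 \<le> e\<^sup>2"
      using assms(1) \<open>e < 1/5\<close> by (simp add: power_decreasing)
    moreover have "0 \<le> e\<^sup>2"
      by simp
    ultimately have "1 - 3 * e \<le> (1 - e) ^ 3"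
      by linarith
    then have "(1 - 3 * e) * (s * W) \<le> (1 - e) ^ 3 * (s * W)"
      using \<open>0 < s\<close> \<open>0 < W\<close> by (intro mult_right_mono) auto
    moreover have "(1 - e)\<^sup>2 * (e * u * (1 + 2 * s)) \<le> e * u * (1 + 2 * s)"
      using assms(1,3) \<open>e < 1/5\<close> \<open>0 < s\<close> by (intro mult_left_le_one_le) (auto simp: power_le_one)
    moreover have "e * u * (1 + 2 * s) \<le> s * s * W"
      using low_high_margin[OF \<open>0 < e\<close> \<open>e < 1/5\<close> \<open>0 < u\<close>] by (simp add: s_def W_def)
    moreover have "(1 - e)\<^sup>2 * ((1 - e) * s * W - e * u * (1 + 2 * s))
        = (1 - e) ^ 3 * (s * W) - (1 - e)\<^sup>2 * (e * u * (1 + 2 * s))"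
      by (simp add: power2_eq_square power3_eq_cube algebra_simps)
    ultimately show ?thesis
      by (simp add: s_def algebra_simps)
  qed
  ultimately show ?thesis
    using le_of_scaled_bounds[OF _ _ G] assms(2,4) \<open>e < 1/5\<close> \<open>0 < s\<close> \<open>0 < W\<close> by simp
qed

lemma loss_le_of_low_average:
  fixes e u b a P Q :: real
  assumes "0 \<le> e" "0 \<le> u" "0 \<le> b" "0 \<le> P" "a \<le> P"
    and high: "b * ((1 + u) * (1 + e)\<^sup>2 * P - a) \<le> Q"
  shows "a * b * (2 * e + u) \<le> Q"
proof -
  have "(1 + u) * (1 + e)\<^sup>2 = 1 + 2 * e + u + (e\<^sup>2 + 2 * e * u + u * e\<^sup>2)"
    by (simp add: power2_eq_square algebra_simps)
  then have "1 + 2 * e + u \<le> (1 + u) * (1 + e)\<^sup>2"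
    using assms(1,2) by simp
  then have "(1 + 2 * e + u) * P \<le> (1 + u) * (1 + e)\<^sup>2 * P"
    using \<open>0 \<le> P\<close> by (intro mult_right_mono)
  moreover have "(2 * e + u) * a \<le> (2 * e + u) * P"
    using assms(1,2,5) by (intro mult_left_mono) auto
  ultimately have "(2 * e + u) * a \<le> (1 + u) * (1 + e)\<^sup>2 * P - a"
    using \<open>a \<le> P\<close> by (simp add: algebra_simps)
  then have "b * ((2 * e + u) * a) \<le> b * ((1 + u) * (1 + e)\<^sup>2 * P - a)"
    using \<open>0 \<le> b\<close> by (rule mult_left_mono)
  with high show ?thesis
    by (simp add: mult_ac)
qed

lemma edge_product_lower_bounds:
  fixes e d q n2 n3 P2 P3 :: real
  assumes "0 < e" "e < 1" "0 < P2" "0 < P3" "0 < q"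
    and n2l: "(1 - e)\<^sup>2 * P2 \<le> n2" and n3l: "(1 - e)\<^sup>2 * P3 \<le> n3"
    and dl: "(1 - e) * q \<le> d" and du: "d \<le> (1 + e) * q"
  shows "(1 - e) ^ 5 * (P2 * P3 * q) \<le> d * n2 * n3"
    and "P2 * q < d * n2 \<Longrightarrow> (1 - e)\<^sup>2 * (P2 * P3 * q) \<le> d * n2 * n3"
    and "P3 * q < d * n3 \<Longrightarrow> (1 - e)\<^sup>2 * (P2 * P3 * q) \<le> d * n2 * n3"
    and "P2 * q < d * n2 \<Longrightarrow> P3 * q < d * n3 \<Longrightarrow> P2 * P3 * q \<le> d * n2 * n3 * (1 + e)"
proof -
  have "0 < (1 - e)\<^sup>2 * P2" "0 < (1 - e)\<^sup>2 * P3" "0 < (1 - e) * q"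
    using assms(1-5) by simp_all
  then have "0 < n2" "0 < n3" "0 < d"
    using n2l n3l dl by linarith+
  have "(1 - e) * q * ((1 - e)\<^sup>2 * P2) \<le> d * n2"
    using \<open>0 < d\<close> \<open>0 < (1 - e)\<^sup>2 * P2\<close> by (intro mult_mono[OF dl n2l]) auto
  then have "(1 - e) * q * ((1 - e)\<^sup>2 * P2) * ((1 - e)\<^sup>2 * P3) \<le> d * n2 * n3"
    using \<open>0 < d\<close> \<open>0 < n2\<close> \<open>0 < (1 - e)\<^sup>2 * P3\<close> by (intro mult_mono[OF _ n3l]) auto
  moreover have "(1 - e) * q * ((1 - e)\<^sup>2 * P2) * ((1 - e)\<^sup>2 * P3) = (1 - e) ^ 5 * (P2 * P3 * q)"
    by (simp add: power2_eq_square power_def numeral_eq_Suc algebra_simps)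
  ultimately show "(1 - e) ^ 5 * (P2 * P3 * q) \<le> d * n2 * n3"
    by simp
  show "(1 - e)\<^sup>2 * (P2 * P3 * q) \<le> d * n2 * n3" if "P2 * q < d * n2"
  proof -
    have "P2 * q * ((1 - e)\<^sup>2 * P3) \<le> d * n2 * n3"
      using that \<open>0 < d\<close> \<open>0 < n2\<close> \<open>0 < (1 - e)\<^sup>2 * P3\<close> by (intro mult_mono[OF _ n3l]) auto
    then show ?thesis
      by (simp add: algebra_simps)
  qed
  show "(1 - e)\<^sup>2 * (P2 * P3 * q) \<le> d * n2 * n3" if "P3 * q < d * n3"
  proof -
    have "P3 * q * ((1 - e)\<^sup>2 * P2) \<le> d * n3 * n2"
      using that \<open>0 < d\<close> \<open>0 < n3\<close> \<open>0 < (1 - e)\<^sup>2 * P2\<close> by (intro mult_mono[OF _ n2l]) auto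
    then show ?thesis
      by (simp add: algebra_simps)
  qed
  show "P2 * P3 * q \<le> d * n2 * n3 * (1 + e)" if "P2 * q < d * n2" "P3 * q < d * n3"
  proof -
    have "(P3 * q) * (P2 * q) \<le> (d * n3) * (d * n2)"
      using that assms(3-5) \<open>0 < d\<close> \<open>0 < n3\<close> by (intro mult_mono[OF less_imp_le less_imp_le]) auto
    also have "\<dots> \<le> (d * n2 * n3) * ((1 + e) * q)"
      using du \<open>0 < d\<close> \<open>0 < n2\<close> \<open>0 < n3\<close> mult_left_mono[OF du, of "d * n2 * n3"] by (simp add: algebra_simps)
    finally have "q * (P2 * P3 * q) \<le> q * (d * n2 * n3 * (1 + e))"
      by (simp add: algebra_simps)
    with \<open>0 < q\<close> show ?thesis
      by simp
  qed
qed

lemma pruned_bound: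
  fixes e u n2 n3 d q P2 P3 b2 b3 Q E2 :: real
  assumes e0: "0 < e" and R: "5 * e + u < 1" and u0: "0 < u"
    and P2: "0 < P2" and P3: "0 < P3" and q0: "0 < q"
    and n2l: "(1 - e)\<^sup>2 * P2 \<le> n2" and n2u: "n2 \<le> (1 + e) * P2"
    and n3l: "(1 - e)\<^sup>2 * P3 \<le> n3" and n3u: "n3 \<le> (1 + e) * P3"
    and dl: "(1 - e) * q \<le> d" and du: "d \<le> (1 + e) * q"
    and b2: "0 \<le> b2" "b2 \<le> e * n2" "b2 * ((1 + u) * (1 + e)\<^sup>2 * P3 * q - d * n3) \<le> Q"
    and b3: "0 \<le> b3" "b3 \<le> e * n3" "b3 * ((1 + u) * (1 + e)\<^sup>2 * P2 * q - d * n2) \<le> Q"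
    and Q: "Q * (1 - 2 * e) \<le> e * u * q * n2 * n3"
    and E: "d * n2 * n3 - (d * n3 * b2 + Q) - (d * n2 * b3 + Q) \<le> E2"
  shows "(1 - 5 * e - u) * (P2 * P3 * q) \<le> E2"
proof -
  define G D L2 L3 where "G = d * n2 * n3" and "D = P2 * P3 * q" and "L2 = d * n3 * b2" and "L3 = d * n2 * b3"
  have "e < 1/5" "0 < D"
    using R u0 P2 P3 q0 by (simp_all add: D_def)
  have "0 < (1 - e)\<^sup>2"
    using \<open>e < 1/5\<close> by simp
  then have "0 < (1 - e)\<^sup>2 * P2" "0 < (1 - e)\<^sup>2 * P3" "0 < (1 - e) * q"
    using P2 P3 q0 \<open>e < 1/5\<close> by simp_all
  then have "0 < n2" "0 < n3" "0 < d"
    using n2l n3l dl by linarith+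
  have E': "G - L2 - L3 - 2 * Q \<le> E2"
    using E by (simp add: G_def L2_def L3_def)
  have "Q * (1 - 2 * e) * (1 - e) \<le> e * u * q * n2 * n3 * (1 - e)"
    using Q \<open>e < 1/5\<close> by (simp add: mult_right_mono)
  moreover have "e * u * n2 * n3 * (q * (1 - e)) \<le> e * u * n2 * n3 * d"
    using dl e0 u0 \<open>0 < n2\<close> \<open>0 < n3\<close> by (intro mult_left_mono) (auto simp: mult.commute)
  ultimately have QG: "Q * ((1 - e) * (1 - 2 * e)) \<le> e * u * G"
    by (simp add: G_def algebra_simps)
  have "d * n3 * b2 \<le> d * n3 * (e * n2)" "d * n2 * b3 \<le> d * n2 * (e * n3)"
    using b2(2) b3(2) \<open>0 < d\<close> \<open>0 < n2\<close> \<open>0 < n3\<close> by (intro mult_left_mono; simp)+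
  then have LG: "L2 \<le> e * G" "L3 \<le> e * G"
    by (simp_all add: L2_def L3_def G_def algebra_simps)
  have low2: "L2 * (2 * e + u) \<le> Q" if "d * n3 \<le> P3 * q"
    using loss_le_of_low_average[of e u b2 "P3 * q" "d * n3" Q] e0 u0 b2(1,3) P3 q0 that
    by (simp add: L2_def mult_ac)
  have low3: "L3 * (2 * e + u) \<le> Q" if "d * n2 \<le> P2 * q"
    using loss_le_of_low_average[of e u b3 "P2 * q" "d * n2" Q] e0 u0 b3(1,3) P2 q0 that
    by (simp add: L3_def mult_ac)
  note G_bounds = edge_product_lower_bounds[OF e0 _ P2 P3 q0 n2l n3l dl du, folded G_def D_def]
  have G5: "(1 - e) ^ 5 * D \<le> G" and G2: "P2 * q < d * n2 \<Longrightarrow> (1 - e)\<^sup>2 * D \<le> G"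
    and G3: "P3 * q < d * n3 \<Longrightarrow> (1 - e)\<^sup>2 * D \<le> G"
    and G1: "P2 * q < d * n2 \<Longrightarrow> P3 * q < d * n3 \<Longrightarrow> D \<le> G * (1 + e)"
    using G_bounds \<open>e < 1/5\<close> by simp_all
  (* An average degree at most its nominal value is exceeded by a high-degree vertex by the margin
     (2e + u) P q, so that side loses at most Q / (2e + u); a larger average degree makes G exceed D
     enough to absorb a loss of e G. *)
  consider "d * n3 \<le> P3 * q" "d * n2 \<le> P2 * q" | "d * n3 \<le> P3 * q" "P2 * q < d * n2"
    | "P3 * q < d * n3" "d * n2 \<le> P2 * q" | "P3 * q < d * n3" "P2 * q < d * n2"
    by linarith
  then show ?thesis
  proof cases
    case 1
    show ?thesis
      using pruned_bound_low_low[OF e0 R u0 \<open>0 < D\<close> G5 QG low2[OF 1(1)] low3[OF 1(2)] E'] by (simp add: D_def)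
  next
    case 2
    show ?thesis
      using pruned_bound_low_high[OF e0 R u0 \<open>0 < D\<close> G2[OF 2(2)] QG LG(2) low2[OF 2(1)]] E'
      by (simp add: D_def diff_diff_eq2 add.commute)
  next
    case 3
    show ?thesis
      using pruned_bound_low_high[OF e0 R u0 \<open>0 < D\<close> G3[OF 3(1)] QG LG(1) low3[OF 3(2)] E'] by (simp add: D_def)
  next
    case 4
    have "n2 * n3 \<le> ((1 + e) * P2) * ((1 + e) * P3)"
      using \<open>0 < n3\<close> e0 P2 by (intro mult_mono[OF n2u n3u]) auto
    then have "e * u * q * (n2 * n3) \<le> e * u * q * (((1 + e) * P2) * ((1 + e) * P3))"
      using e0 u0 q0 by (intro mult_left_mono) auto
    then have QD: "Q * (1 - 2 * e) \<le> e * u * (1 + e)\<^sup>2 * D"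
      using Q by (simp add: D_def power2_eq_square algebra_simps)
    show ?thesis
      using pruned_bound_high_high[OF e0 R u0 \<open>0 < D\<close> G1[OF 4(2,1)] QD LG E'] by (simp add: D_def)
  qed
qed

lemma regular_pair_pruning:
  fixes E :: "'a \<Rightarrow> 'a \<Rightarrow> bool" and M2 M3 :: "'a set" and \<epsilon> p q u P2 P3 :: real
  defines "H2 \<equiv> high_degree E M2 M3 ((1 + u) * (1 + \<epsilon>)\<^sup>2 * P3 * q)"
    and "H3 \<equiv> high_degree E M3 M2 ((1 + u) * (1 + \<epsilon>)\<^sup>2 * P2 * q)"
  assumes E: "graph E" and fin: "finite M2" "finite M3" and reg: "eps_p_regular E \<epsilon> p M2 M3"
    and pos: "0 < \<epsilon>" "0 < u" "0 < q" "0 < P2" "0 < P3" and small: "5 * \<epsilon> + u < 1"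
    and dens: "approx_eq (density E M2 M3) \<epsilon> q" and p_le: "\<epsilon> * p \<le> u / 2 * q"
    and M2: "(1 - \<epsilon>)\<^sup>2 * P2 \<le> card M2" "card M2 \<le> (1 + \<epsilon>) * P2"
    and M3: "(1 - \<epsilon>)\<^sup>2 * P3 \<le> card M3" "card M3 \<le> (1 + \<epsilon>) * P3"
  shows "(1 - 5 * \<epsilon> - u) * (P2 * P3 * q) \<le> e_count E (M2 - H2) (M3 - H3)"
proof -
  define n2 n3 d where "n2 = real (card M2)" and "n3 = real (card M3)" and "d = density E M2 M3"
  define Q where "Q = 2 * \<epsilon>\<^sup>2 * p * n2 * n3 / (1 - 2 * \<epsilon>)"
  have "\<epsilon> < 1/2"
    using pos small by simp
  have "0 < (1 - \<epsilon>)\<^sup>2 * P2" "0 < (1 - \<epsilon>)\<^sup>2 * P3"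
    using \<open>\<epsilon> < 1/2\<close> pos by simp_all
  then have "0 < n2" "0 < n3"
    using M2(1) M3(1) n2_def n3_def by linarith+
  have d_bounds: "(1 - \<epsilon>) * q \<le> d" "d \<le> (1 + \<epsilon>) * q"
    using dens by (auto simp: approx_eq_def d_def)
  have "u / 2 * q \<le> u * (1 + \<epsilon>) * q"
    using pos by (intro mult_right_mono) auto
  moreover have "(1 + u) * (1 + \<epsilon>) * q = (1 + \<epsilon>) * q + u * (1 + \<epsilon>) * q"
    by (simp add: algebra_simps)
  ultimately have "d + \<epsilon> * p \<le> (1 + u) * (1 + \<epsilon>) * q"
    using d_bounds(2) p_le by linarith
  then have "(d + \<epsilon> * p) * n3 \<le> ((1 + u) * (1 + \<epsilon>) * q) * ((1 + \<epsilon>) * P3)"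
    and "(d + \<epsilon> * p) * n2 \<le> ((1 + u) * (1 + \<epsilon>) * q) * ((1 + \<epsilon>) * P2)"
    using M2(2) M3(2) pos \<open>0 < n2\<close> \<open>0 < n3\<close> by (auto intro!: mult_mono simp: n2_def n3_def)
  then have thresholds: "(d + \<epsilon> * p) * n3 \<le> (1 + u) * (1 + \<epsilon>)\<^sup>2 * P3 * q"
    "(d + \<epsilon> * p) * n2 \<le> (1 + u) * (1 + \<epsilon>)\<^sup>2 * P2 * q"
    by (simp_all add: power2_eq_square mult_ac)
  have reg23: "eps_p_regular E \<epsilon> p M3 M2"
    using E reg by (rule eps_p_regular_commute)
  note H2 = high_degree_bounds[OF reg fin pos(1) \<open>\<epsilon> < 1/2\<close>, folded d_def n2_def n3_def,
      OF thresholds(1), folded H2_def Q_def]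
  note H3 = high_degree_bounds[OF reg23 fin(2,1) pos(1) \<open>\<epsilon> < 1/2\<close>, unfolded density_commute[OF E, of M3 M2],
      folded d_def n2_def n3_def, OF thresholds(2), folded H3_def]
  have "Q * (1 - 2 * \<epsilon>) = 2 * \<epsilon> * n2 * n3 * (\<epsilon> * p)"
    using \<open>\<epsilon> < 1/2\<close> by (simp add: Q_def power2_eq_square)
  also have "\<dots> \<le> 2 * \<epsilon> * n2 * n3 * (u / 2 * q)"
    using p_le pos \<open>0 < n2\<close> \<open>0 < n3\<close> by (intro mult_left_mono) auto
  finally have Q_le: "Q * (1 - 2 * \<epsilon>) \<le> \<epsilon> * u * q * n2 * n3"
    by (simp add: mult_ac)
  have "2 * \<epsilon>\<^sup>2 * p * n3 * n2 / (1 - 2 * \<epsilon>) = Q"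
    by (simp add: Q_def mult_ac)
  note H3 = H3[unfolded this]
  have "e_count E M2 M3 = d * n2 * n3"
    using \<open>0 < n2\<close> \<open>0 < n3\<close> by (simp add: d_def density_def n2_def n3_def)
  moreover have "H2 \<subseteq> M2" "H3 \<subseteq> M3"
    by (auto simp: H2_def H3_def high_degree_def)
  then have "e_count E M2 M3 \<le> e_count E (M2 - H2) (M3 - H3) + e_count E H2 M3 + e_count E H3 M2"
    using e_count_le_prune[OF fin, of H2 H3 E] e_count_commute[OF E, of M2 H3] by simp
  ultimately have "d * n2 * n3 - (d * n3 * card H2 + Q) - (d * n2 * card H3 + Q) \<le> e_count E (M2 - H2) (M3 - H3)"
    using H2(2) H3(2) by linarith
  then show ?thesis
    using pruned_bound[OF pos(1) small pos(2,4,5,3) M2[folded n2_def] M3[folded n3_def] d_bounds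
        _ H2(1,3) _ H3(1,3) Q_le]
    by simp
qed

lemma typicalE:
  fixes \<epsilon> p d12 d13 d23 :: real
  assumes "typical E \<epsilon> p d12 d13 d23 V2 V3 v" "finite V2" "finite V3" "\<epsilon> \<le> 1"
  obtains M2 M3 where "M2 \<subseteq> nbhd E v \<inter> V2" "M3 \<subseteq> nbhd E v \<inter> V3"
    "(1 - \<epsilon>)\<^sup>2 * (d12 * p * card V2) \<le> card M2" "card M2 \<le> (1 + \<epsilon>) * (d12 * p * card V2)"
    "(1 - \<epsilon>)\<^sup>2 * (d13 * p * card V3) \<le> card M3" "card M3 \<le> (1 + \<epsilon>) * (d13 * p * card V3)"
    "eps_p_regular E \<epsilon> p M2 M3" "approx_eq (density E M2 M3) \<epsilon> (d23 * p)"
proof -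
  define N2 N3 where "N2 = nbhd E v \<inter> V2" and "N3 = nbhd E v \<inter> V3"
  obtain M2 M3 where M: "M2 \<subseteq> N2" "M3 \<subseteq> N3"
    "(1 - \<epsilon>) * card N2 \<le> card M2" "(1 - \<epsilon>) * card N3 \<le> card M3"
    "eps_p_regular E \<epsilon> p M2 M3" "approx_eq (density E M2 M3) \<epsilon> (d23 * p)"
    and N: "approx_eq (card N2) \<epsilon> (d12 * p * card V2)" "approx_eq (card N3) \<epsilon> (d13 * p * card V3)"
    using assms(1) unfolding typical_def Let_def N2_def N3_def by blast
  have "card M2 \<le> card N2" "card M3 \<le> card N3"
    using M(1,2) assms(2,3) by (auto intro!: card_mono simp: N2_def N3_def)
  moreover have "(1 - \<epsilon>) * ((1 - \<epsilon>) * (d12 * p * card V2)) \<le> (1 - \<epsilon>) * card N2"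
    "(1 - \<epsilon>) * ((1 - \<epsilon>) * (d13 * p * card V3)) \<le> (1 - \<epsilon>) * card N3"
    using N assms(4) by (auto intro!: mult_left_mono simp: approx_eq_def)
  ultimately show ?thesis
    using that[of M2 M3] M N by (auto simp: N2_def N3_def approx_eq_def power2_eq_square mult.assoc)
qed

lemma card_le_card_filter_add_card_filter_not:
  assumes "finite B" "A \<subseteq> B"
  shows "card A \<le> card {x\<in>A. P x} + card {x\<in>B. \<not> P x}"
proof -
  have "card A \<le> card ({x\<in>A. P x} \<union> {x\<in>B. \<not> P x})"
    using assms by (intro card_mono) (auto intro: finite_subset)
  also have "\<dots> \<le> card {x\<in>A. P x} + card {x\<in>B. \<not> P x}"
    by (rule card_Un_le)
  finally show ?thesis .
qed

lemma typical_vertex_pruning: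
  fixes E :: "'a \<Rightarrow> 'a \<Rightarrow> bool" and V2 V3 :: "'a set" and \<epsilon> \<delta> p d12 d13 d23 :: real
  defines "u \<equiv> 2 * \<epsilon> / \<delta>" and "D \<equiv> d12 * d13 * d23 * p ^ 3 * card V2 * card V3"
  assumes E: "graph E" and fin: "finite V2" "finite V3"
    and pos: "0 < \<epsilon>" "0 < \<delta>" "0 < p" and "\<epsilon> < 1/2"
    and d_ge: "\<delta> \<le> d12" "\<delta> \<le> d13" "\<delta> \<le> d23" and v_typical: "typical E \<epsilon> p d12 d13 d23 V2 V3 v"
  obtains N2 N3 where "N2 \<subseteq> nbhd E v \<inter> V2" "N3 \<subseteq> nbhd E v \<inter> V3"
    "(1 - 5 * \<epsilon> - u) * D \<le> e_count E N2 N3"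
    "\<forall>x\<in>N2. card (nbhd E x \<inter> N3) \<le> (1 + u) * (1 + \<epsilon>)\<^sup>2 * (d13 * p * card V3) * (d23 * p)"
    "\<forall>x\<in>N3. card (nbhd E x \<inter> N2) \<le> (1 + u) * (1 + \<epsilon>)\<^sup>2 * (d12 * p * card V2) * (d23 * p)"
proof -
  have "\<epsilon> \<le> 1"
    using \<open>\<epsilon> < 1/2\<close> by simp
  obtain M2 M3 where M: "M2 \<subseteq> nbhd E v \<inter> V2" "M3 \<subseteq> nbhd E v \<inter> V3"
    "(1 - \<epsilon>)\<^sup>2 * (d12 * p * card V2) \<le> card M2" "card M2 \<le> (1 + \<epsilon>) * (d12 * p * card V2)"
    "(1 - \<epsilon>)\<^sup>2 * (d13 * p * card V3) \<le> card M3" "card M3 \<le> (1 + \<epsilon>) * (d13 * p * card V3)"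
    "eps_p_regular E \<epsilon> p M2 M3" "approx_eq (density E M2 M3) \<epsilon> (d23 * p)"
    using typicalE[OF v_typical fin \<open>\<epsilon> \<le> 1\<close>] by blast
  define P2 P3 q where "P2 = d12 * p * card V2" and "P3 = d13 * p * card V3" and "q = d23 * p"
  define N2 where "N2 = M2 - high_degree E M2 M3 ((1 + u) * (1 + \<epsilon>)\<^sup>2 * P3 * q)"
  define N3 where "N3 = M3 - high_degree E M3 M2 ((1 + u) * (1 + \<epsilon>)\<^sup>2 * P2 * q)"
  have "finite M2" "finite M3"
    using M(1,2) fin finite_subset by auto
  have "0 < u"
    using pos by (simp add: u_def)
  have "\<epsilon> * p = u / 2 * (\<delta> * p)"
    using pos by (simp add: u_def)
  also have "\<dots> \<le> u / 2 * q"
    using pos d_ge(3) \<open>0 < u\<close> by (auto intro!: mult_left_mono mult_right_mono simp: q_def)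
  finally have p_le: "\<epsilon> * p \<le> u / 2 * q" .
  have "0 < d12" "0 < d13" "0 < d23"
    using pos d_ge by linarith+
  then have "0 \<le> D"
    using pos by (simp add: D_def)
  have "(1 - 5 * \<epsilon> - u) * D \<le> e_count E N2 N3"
  proof (cases "5 * \<epsilon> + u < 1 \<and> 0 < D")
    case True
    have "card V2 = 0 \<Longrightarrow> D = 0" "card V3 = 0 \<Longrightarrow> D = 0"
      by (simp_all add: D_def)
    with True have "card V2 \<noteq> 0" "card V3 \<noteq> 0"
      by auto
    with \<open>0 < d12\<close> \<open>0 < d13\<close> \<open>0 < d23\<close> pos have "0 < q" "0 < P2" "0 < P3"
      by (simp_all add: P2_def P3_def q_def)
    with True have "(1 - 5 * \<epsilon> - u) * (P2 * P3 * q) \<le> e_count E N2 N3"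
      unfolding N2_def N3_def
      using E \<open>finite M2\<close> \<open>finite M3\<close> M(7) pos(1) \<open>0 < u\<close> M(8)[folded q_def] p_le M(3-6)[folded P2_def P3_def]
      by (intro regular_pair_pruning) auto
    moreover have "D = P2 * P3 * q"
      by (simp add: D_def P2_def P3_def q_def power3_eq_cube mult_ac)
    ultimately show ?thesis
      by simp
  next
    case False
    then have "(1 - 5 * \<epsilon> - u) * D \<le> 0"
      using \<open>0 \<le> D\<close> by (auto intro: mult_nonpos_nonneg)
    then show ?thesis
      by simp
  qed
  moreover have "N2 \<subseteq> nbhd E v \<inter> V2" "N3 \<subseteq> nbhd E v \<inter> V3"
    using M(1,2) by (auto simp: N2_def N3_def)
  moreover have "\<forall>x\<in>N2. card (nbhd E x \<inter> N3) \<le> (1 + u) * (1 + \<epsilon>)\<^sup>2 * P3 * q"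
    using \<open>finite M3\<close> unfolding N3_def N2_def by (blast intro: degree_le_outside_high_degree)
  moreover have "\<forall>x\<in>N3. card (nbhd E x \<inter> N2) \<le> (1 + u) * (1 + \<epsilon>)\<^sup>2 * P2 * q"
    using \<open>finite M2\<close> unfolding N3_def N2_def by (blast intro: degree_le_outside_high_degree)
  ultimately show ?thesis
    using that unfolding P2_def P3_def q_def by blast
qed

lemma card_good_edges_ge:
  fixes \<epsilon> p d12 d13 d23 :: real
  assumes "good_vertex E \<epsilon> p d12 d13 d23 V1 V2 V3 v" "finite V2" "finite V3"
    and "N2 \<subseteq> nbhd E v \<inter> V2" "N3 \<subseteq> nbhd E v \<inter> V3"
  shows "e_count E N2 N3 - \<epsilon> * d12 * d13 * d23 * p ^ 3 * card V2 * card V3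
      \<le> card {xy \<in> edges_between E N2 N3. good_edge E \<epsilon> p d12 d13 V1 V2 V3 xy}"
proof -
  define Bad where
    "Bad = {xy \<in> edges_between E (nbhd E v \<inter> V2) (nbhd E v \<inter> V3). \<not> good_edge E \<epsilon> p d12 d13 V1 V2 V3 xy}"
  have "edges_between E N2 N3 \<subseteq> edges_between E (nbhd E v \<inter> V2) (nbhd E v \<inter> V3)"
    using assms(4,5) by (auto simp: edges_between_def)
  then have "e_count E N2 N3 \<le> card {xy \<in> edges_between E N2 N3. good_edge E \<epsilon> p d12 d13 V1 V2 V3 xy} + card Bad"
    unfolding e_count_def Bad_def using assms(2,3)
    by (intro card_le_card_filter_add_card_filter_not finite_edges_between) auto
  moreover have "card Bad \<le> \<epsilon> * d12 * d13 * d23 * p ^ 3 * card V2 * card V3"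
    using assms(1) by (simp add: good_vertex_def Bad_def)
  ultimately show ?thesis
    by linarith
qed

theorem proposition2p14:
  fixes E :: "'a \<Rightarrow> 'a \<Rightarrow> bool" and V1 V2 V3 :: "'a set"
    and \<epsilon> \<delta> p d12 d13 d23 :: real and v :: 'a
  assumes "graph E"
    and "finite V1" and "finite V2" and "finite V3"
    and "V1 \<inter> V2 = {}" and "V1 \<inter> V3 = {}" and "V2 \<inter> V3 = {}"
    and "\<epsilon> > 0" and "\<delta> > 0" and "p > 0" and "\<epsilon> < 1/2"
    and "density E V1 V2 = d12 * p" and "density E V1 V3 = d13 * p"
    and "density E V2 V3 = d23 * p"
    and "d12 \<ge> \<delta>" and "d13 \<ge> \<delta>" and "d23 \<ge> \<delta>"
    and "v \<in> V1" and "typical E \<epsilon> p d12 d13 d23 V2 V3 v"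
  shows "\<exists>N2 N3. N2 \<subseteq> nbhd E v \<inter> V2 \<and> N3 \<subseteq> nbhd E v \<inter> V3 \<and>
     real (e_count E N2 N3)
       \<ge> (1 - 6 * \<epsilon> - 2 * \<epsilon> / \<delta>) * d12 * d13 * d23 * p ^ 3 * real (card V2) * real (card V3) \<and>
     (good_vertex E \<epsilon> p d12 d13 d23 V1 V2 V3 v \<longrightarrow>
        real (card {xy \<in> edges_between E N2 N3. good_edge E \<epsilon> p d12 d13 V1 V2 V3 xy})
          \<ge> (1 - 6 * \<epsilon> - 2 * \<epsilon> / \<delta>) * d12 * d13 * d23 * p ^ 3 * real (card V2) * real (card V3)) \<and>
     (\<forall>x\<in>N2. real (card (nbhd E x \<inter> N3))
         \<le> (1 + 2 * \<epsilon> / \<delta>) * (1 + \<epsilon>) ^ 2 * d13 * d23 * p ^ 2 * real (card V3)) \<and>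
     (\<forall>x\<in>N3. real (card (nbhd E x \<inter> N2))
         \<le> (1 + 2 * \<epsilon> / \<delta>) * (1 + \<epsilon>) ^ 2 * d12 * d23 * p ^ 2 * real (card V2))"
proof -
  define u D where "u = 2 * \<epsilon> / \<delta>" and "D = d12 * d13 * d23 * p ^ 3 * real (card V2) * real (card V3)"
  obtain N2 N3 where N: "N2 \<subseteq> nbhd E v \<inter> V2" "N3 \<subseteq> nbhd E v \<inter> V3"
    "(1 - 5 * \<epsilon> - u) * D \<le> e_count E N2 N3"
    "\<forall>x\<in>N2. card (nbhd E x \<inter> N3) \<le> (1 + u) * (1 + \<epsilon>)\<^sup>2 * (d13 * p * card V3) * (d23 * p)"
    "\<forall>x\<in>N3. card (nbhd E x \<inter> N2) \<le> (1 + u) * (1 + \<epsilon>)\<^sup>2 * (d12 * p * card V2) * (d23 * p)"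
    using typical_vertex_pruning[OF assms(1,3,4,8,9,10,11,15,16,17,19)] unfolding u_def D_def by blast
  have "0 \<le> \<epsilon> * D"
    using assms(8-10,15-17) by (simp add: D_def)
  then have "(1 - 6 * \<epsilon> - u) * D \<le> e_count E N2 N3 - \<epsilon> * D"
    using N(3) by (simp add: algebra_simps)
  moreover have "e_count E N2 N3 - \<epsilon> * D \<le> card {xy \<in> edges_between E N2 N3. good_edge E \<epsilon> p d12 d13 V1 V2 V3 xy}"
    if "good_vertex E \<epsilon> p d12 d13 d23 V1 V2 V3 v"
    using card_good_edges_ge[OF that assms(3,4) N(1,2)] by (simp add: D_def mult_ac)
  ultimately show ?thesis
    using N \<open>0 \<le> \<epsilon> * D\<close>
    by (intro exI[of _ N2] exI[of _ N3]) (auto simp: u_def D_def power2_eq_square mult_ac)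
qed

end
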